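(* Let $\zeta:G\to(0,\infty)$, with $G\subseteq\mathbb{R}^2$ open, be twice continuously differentiable. Then: (i) if $G$ is convex, then $\partial_x\partial_y\log\zeta\equiv0$ on $G$ if and only if $\zeta$ is separable; (ii) $\zeta$ is strictly non-separable if and only if the open set $G':=\{z\in G:\partial_x\partial_y\log\zeta(z)\neq0\}$ is dense in $G$; (iii) if $\mathcal{O}\subseteq G'$ is symmetric, open and convex, then $(\partial_x\partial_y\log\zeta)|_{\mathcal{O}}$ is separable and symmetric if and only if $\zeta|_{\mathcal{O}}$ is pseudo-Gaussian.
   Context: For $G\subseteq\mathbb{R}^2$ open, a function $\varsigma:G\to\mathbb{R}$ is pseudo-Gaussian if there are functions $\varsigma_1,\varsigma_2,\varsigma_3:\mathbb{R}\to\mathbb{R}$ and a fixed sign $\pm$ with $\varsigma(x,y)=\varsigma_1(x)\varsigma_2(y)\exp(\pm\varsigma_3(x)\varsigma_3(y))$ on all of $G$; it is separable if this holds with $\varsigma_3\equiv0$ (i.e. $\varsigma(x,y)=\varsigma_1(x)\varsigma_2(y)$). $\varsigma$ is strictly non-separable if $\varsigma|_{\mathcal{O}}$ is not separable for every nonempty open $\mathcal{O}\subseteq G$. A set $A\subseteq\mathbb{R}^2$ is symmetric if $\tau(A)=A$ for $\tau(u,v)=(v,u)$, and a function $\varphi$ on such a set is symmetric if $\varphi\circ\tau=\varphi$. *)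

theory Defs
  imports "HOL-Analysis.Analysis"
begin

definition px :: "(real \<times> real \<Rightarrow> real) \<Rightarrow> real \<times> real \<Rightarrow> real" where
  "px f = (\<lambda>(x, y). deriv (\<lambda>t. f (t, y)) x)"

definition py :: "(real \<times> real \<Rightarrow> real) \<Rightarrow> real \<times> real \<Rightarrow> real" where
  "py f = (\<lambda>(x, y). deriv (\<lambda>t. f (x, t)) y)"

definition has_partials_on :: "(real \<times> real) set \<Rightarrow> (real \<times> real \<Rightarrow> real) \<Rightarrow> bool" where
  "has_partials_on G f \<longleftrightarrow>
     (\<forall>x y. (x, y) \<in> G \<longrightarrow>
        (\<lambda>t. f (t, y)) differentiable (at x) \<and> (\<lambda>t. f (x, t)) differentiable (at y))"

definition C2_on :: "(real \<times> real) set \<Rightarrow> (real \<times> real \<Rightarrow> real) \<Rightarrow> bool" where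
  "C2_on G f \<longleftrightarrow>
     continuous_on G f \<and> has_partials_on G f \<and>
     continuous_on G (px f) \<and> continuous_on G (py f) \<and>
     has_partials_on G (px f) \<and> has_partials_on G (py f) \<and>
     continuous_on G (px (px f)) \<and> continuous_on G (px (py f)) \<and>
     continuous_on G (py (px f)) \<and> continuous_on G (py (py f))"

definition separable_on :: "(real \<times> real) set \<Rightarrow> (real \<times> real \<Rightarrow> real) \<Rightarrow> bool" where
  "separable_on G f \<longleftrightarrow>
     (\<exists>f1 f2 :: real \<Rightarrow> real. \<forall>x y. (x, y) \<in> G \<longrightarrow> f (x, y) = f1 x * f2 y)"

definition pseudo_gaussian_on :: "(real \<times> real) set \<Rightarrow> (real \<times> real \<Rightarrow> real) \<Rightarrow> bool" where
  "pseudo_gaussian_on G f \<longleftrightarrow>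
     (\<exists>(f1 :: real \<Rightarrow> real) (f2 :: real \<Rightarrow> real) (f3 :: real \<Rightarrow> real) (s :: real).
        (s = 1 \<or> s = -1) \<and>
        (\<forall>x y. (x, y) \<in> G \<longrightarrow> f (x, y) = f1 x * f2 y * exp (s * f3 x * f3 y)))"

definition strictly_non_separable_on :: "(real \<times> real) set \<Rightarrow> (real \<times> real \<Rightarrow> real) \<Rightarrow> bool" where
  "strictly_non_separable_on G f \<longleftrightarrow>
     (\<forall>U. open U \<and> U \<noteq> {} \<and> U \<subseteq> G \<longrightarrow> \<not> separable_on U f)"

definition swap2 :: "real \<times> real \<Rightarrow> real \<times> real" where
  "swap2 = (\<lambda>(u, v). (v, u))"

definition symmetric_set :: "(real \<times> real) set \<Rightarrow> bool" where
  "symmetric_set A \<longleftrightarrow> swap2 ` A = A"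

definition symmetric_fun_on :: "(real \<times> real) set \<Rightarrow> (real \<times> real \<Rightarrow> real) \<Rightarrow> bool" where
  "symmetric_fun_on A f \<longleftrightarrow> (\<forall>z\<in>A. f (swap2 z) = f z)"

definition dxdy_log :: "(real \<times> real \<Rightarrow> real) \<Rightarrow> real \<times> real \<Rightarrow> real" where
  "dxdy_log f = px (py (\<lambda>z. ln (f z)))"

end

(* The argument runs through phi = ln zeta, whose mixed partial is dxdy_log zeta.
   On an open convex set, if d_x d_y phi = k(x) m(y) and K' = k, M' = m, then
   phi - K(x) M(y) has vanishing mixed partial, so integrating once in each variable
   gives phi = a(x) + b(y) + K(x) M(y); conversely such a form near a point forces
   d_x d_y phi = K' M' there.  With k = m = 0 this is (i), and (ii) follows by
   applying (i) on small balls.  For (iii), a separable, symmetric, nowhere vanishing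
   function on a connected symmetric set is s h(x) h(y) with s = 1 or s = -1, so
   phi = a(x) + b(y) + s H(x) H(y) with H' = h, i.e. zeta is pseudo-Gaussian.
   Conversely, if ln zeta = a(x) + b(y) + s g(x) g(y) and the mixed partial never
   vanishes, then g is differentiable and d_x d_y ln zeta = s g'(x) g'(y). *)

theory Submission
  imports Defs
begin

section \<open>Mixed partial derivatives and product forms\<close>

definition has_mixed_partial_on :: "(real \<times> real) set \<Rightarrow>
    (real \<times> real \<Rightarrow> real) \<Rightarrow> (real \<times> real \<Rightarrow> real) \<Rightarrow> (real \<times> real \<Rightarrow> real) \<Rightarrow> bool"
  where "has_mixed_partial_on U \<phi> Q R \<longleftrightarrow>
    (\<forall>x y. (x, y) \<in> U \<longrightarrow>
       ((\<lambda>t. \<phi> (x, t)) has_real_derivative Q (x, y)) (at y) \<and>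
       ((\<lambda>s. Q (s, y)) has_real_derivative R (x, y)) (at x))"

lemma has_mixed_partial_onD:
  assumes "has_mixed_partial_on U \<phi> Q R" "(x, y) \<in> U"
  shows "((\<lambda>t. \<phi> (x, t)) has_real_derivative Q (x, y)) (at y)"
    and "((\<lambda>s. Q (s, y)) has_real_derivative R (x, y)) (at x)"
  using assms by (auto simp: has_mixed_partial_on_def)

lemma has_mixed_partial_on_subset:
  "has_mixed_partial_on V \<phi> Q R \<Longrightarrow> U \<subseteq> V \<Longrightarrow> has_mixed_partial_on U \<phi> Q R"
  by (auto simp: has_mixed_partial_on_def)

lemma convex_slices:
  fixes U :: "(real \<times> real) set"
  assumes "convex U"
  shows "convex {x. (x, y) \<in> U}" and "convex {y. (x, y) \<in> U}"
proof -
  have "{x. (x, y) \<in> U} = fst ` (U \<inter> UNIV \<times> {y})" "{y. (x, y) \<in> U} = snd ` (U \<inter> {x} \<times> UNIV)"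
    by force+
  then show "convex {x. (x, y) \<in> U}" "convex {y. (x, y) \<in> U}"
    using assms by (metis convex_Int convex_Times convex_UNIV convex_singleton
        convex_linear_image linear_fst linear_snd)+
qed

lemma symmetric_set_swap: "symmetric_set U \<Longrightarrow> (x, y) \<in> U \<Longrightarrow> (y, x) \<in> U"
  unfolding symmetric_set_def swap2_def by force

lemma symmetric_set_image_snd: "symmetric_set U \<Longrightarrow> snd ` U = fst ` U"
  using symmetric_set_swap by force

lemma exists_antiderivative_open_interval:
  fixes h :: "real \<Rightarrow> real"
  assumes "open P" "is_interval P" "continuous_on P h"
  obtains F where "\<And>x. x \<in> P \<Longrightarrow> (F has_real_derivative h x) (at x)"
proof (cases "P = {}")
  case False
  define a where "a = (INF x\<in>P. ereal x)"
  define b where "b = (SUP x\<in>P. ereal x)"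
  have "P = einterval a b"
  proof (intro subset_antisym subsetI)
    fix x assume x: "x \<in> P"
    obtain e where "e > 0" "ball x e \<subseteq> P" using assms(1) x open_contains_ball by blast
    then have "x - e / 2 \<in> P" "x + e / 2 \<in> P" by (auto simp: dist_real_def)
    then have lo: "a \<le> ereal (x - e / 2)" and hi: "ereal (x + e / 2) \<le> b"
      unfolding a_def b_def by (auto intro: INF_lower SUP_upper)
    have "a < ereal x" by (rule le_less_trans[OF lo]) (simp add: \<open>e > 0\<close>)
    moreover have "ereal x < b" by (rule less_le_trans[OF _ hi]) (simp add: \<open>e > 0\<close>)
    ultimately show "x \<in> einterval a b" by (simp add: einterval_def)
  next
    fix x assume "x \<in> einterval a b"
    then obtain p q where "p \<in> P" "q \<in> P" "p < x" "x < q"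
      by (auto simp: einterval_def a_def b_def INF_less_iff less_SUP_iff)
    then show "x \<in> P" using assms(2) unfolding is_interval_1 by (meson less_imp_le)
  qed
  moreover have "a < b" using False calculation by (auto simp: einterval_def)
  moreover have "isCont h x" if "x \<in> P" for x
    using assms(1,3) that continuous_on_eq_continuous_at by blast
  ultimately obtain F where "\<And>x. x \<in> P \<Longrightarrow> (F has_vector_derivative h x) (at x)"
    using einterval_antiderivative[of a b h] by (auto simp: einterval_iff)
  then show ?thesis by (intro that[of F]) (simp add: has_real_derivative_iff_has_vector_derivative)
qed auto

lemma continuous_on_snd_factor:
  fixes U :: "('a::topological_space \<times> 'b::t2_space) set"
    and f :: "'a \<times> 'b \<Rightarrow> 'c::real_normed_field"
  assumes "open U" "continuous_on U f"
    and f: "\<And>x y. (x, y) \<in> U \<Longrightarrow> f (x, y) = g x * h y"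
    and g: "\<And>x y. (x, y) \<in> U \<Longrightarrow> g x \<noteq> 0"
  shows "continuous_on (snd ` U) h"
  unfolding continuous_on_eq_continuous_at[OF open_image_snd[OF \<open>open U\<close>]]
proof
  fix y0 assume "y0 \<in> snd ` U"
  then obtain x0 where "(x0, y0) \<in> U" by force
  then obtain S T where ST: "open S" "open T" "x0 \<in> S" "y0 \<in> T" "S \<times> T \<subseteq> U"
    using \<open>open U\<close> open_prod_elim by (metis mem_Sigma_iff)
  have "g x0 \<noteq> 0" using g \<open>(x0, y0) \<in> U\<close> .
  have "continuous_on T (\<lambda>y. f (x0, y) / g x0)"
    using ST \<open>g x0 \<noteq> 0\<close>
    by (intro continuous_intros continuous_on_compose2[OF \<open>continuous_on U f\<close>]) auto
  moreover have "f (x0, y) / g x0 = h y" if "y \<in> T" for y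
    using f[of x0 y] ST that \<open>g x0 \<noteq> 0\<close> by auto
  ultimately have "continuous_on T h" by (rule continuous_on_eq)
  then show "isCont h y0" using ST continuous_on_eq_continuous_at by blast
qed

lemma additive_form_if_mixed_partial_zero:
  assumes U: "open U" "convex U" and mp: "has_mixed_partial_on U \<phi> Q R"
    and contQ: "continuous_on U Q" and R0: "\<And>z. z \<in> U \<Longrightarrow> R z = 0"
  obtains a b where "\<And>x y. (x, y) \<in> U \<Longrightarrow> \<phi> (x, y) = a x + b y"
proof -
  have "\<forall>y. \<exists>c. \<forall>x \<in> {x. (x, y) \<in> U}. Q (x, y) = c"
  proof
    fix y show "\<exists>c. \<forall>x \<in> {x. (x, y) \<in> U}. Q (x, y) = c"
    proof (rule has_field_derivative_zero_constant[OF convex_slices(1)[OF U(2)]])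
      fix x assume "x \<in> {x. (x, y) \<in> U}"
      then have "((\<lambda>s. Q (s, y)) has_real_derivative 0) (at x)"
        using has_mixed_partial_onD(2)[OF mp, of x y] R0[of "(x, y)"] by simp
      then show "((\<lambda>s. Q (s, y)) has_real_derivative 0) (at x within {x. (x, y) \<in> U})"
        by (rule has_field_derivative_at_within)
    qed
  qed
  from choice[OF this] obtain \<beta> where \<beta>: "\<forall>y. \<forall>x \<in> {x. (x, y) \<in> U}. Q (x, y) = \<beta> y"
    by blast
  have "is_interval (snd ` U)"
    using U(2) by (simp add: is_interval_convex_1 convex_linear_image linear_snd)
  moreover have "continuous_on (snd ` U) \<beta>"
    by (rule continuous_on_snd_factor[OF U(1) contQ, where g = "\<lambda>_. 1"]) (use \<beta> in simp_all)
  ultimately obtain B where B: "\<And>y. y \<in> snd ` U \<Longrightarrow> (B has_real_derivative \<beta> y) (at y)"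
    using exists_antiderivative_open_interval[OF open_image_snd[OF U(1)]] by blast
  have "\<forall>x. \<exists>c. \<forall>y \<in> {y. (x, y) \<in> U}. \<phi> (x, y) - B y = c"
  proof
    fix x show "\<exists>c. \<forall>y \<in> {y. (x, y) \<in> U}. \<phi> (x, y) - B y = c"
    proof (rule has_field_derivative_zero_constant[OF convex_slices(2)[OF U(2)]])
      fix y assume "y \<in> {y. (x, y) \<in> U}"
      then have xy: "(x, y) \<in> U" and "y \<in> snd ` U" by force+
      then have "((\<lambda>t. \<phi> (x, t) - B t) has_real_derivative Q (x, y) - \<beta> y) (at y)"
        by (intro DERIV_diff has_mixed_partial_onD(1)[OF mp xy] B)
      then show "((\<lambda>t. \<phi> (x, t) - B t) has_real_derivative 0) (at y within {y. (x, y) \<in> U})"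
        using \<beta> xy by (simp add: has_field_derivative_at_within)
    qed
  qed
  from choice[OF this] obtain a where "\<forall>x. \<forall>y \<in> {y. (x, y) \<in> U}. \<phi> (x, y) - B y = a x"
    by blast
  then show ?thesis by (intro that[of a B]) (simp add: algebra_simps)
qed

lemma mixed_partial_of_local_product_form:
  assumes mp: "has_mixed_partial_on U \<phi> Q R"
    and ST: "open S" "open T" "x0 \<in> S" "y0 \<in> T" "S \<times> T \<subseteq> U"
    and form: "\<And>x y. x \<in> S \<Longrightarrow> y \<in> T \<Longrightarrow> \<phi> (x, y) = a x + b y + K x * M y"
    and K: "(K has_real_derivative k) (at x0)" and M: "(M has_real_derivative m) (at y0)"
  shows "R (x0, y0) = k * m"
proof -
  have Q_increment: "Q (x, y0) = Q (x0, y0) + (K x - K x0) * m" if x: "x \<in> S" for x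
  proof -
    have "((\<lambda>t. \<phi> (x, t) - \<phi> (x0, t)) has_real_derivative Q (x, y0) - Q (x0, y0)) (at y0)"
      using x ST by (intro DERIV_diff has_mixed_partial_onD(1)[OF mp]) auto
    moreover have "((\<lambda>t. \<phi> (x, t) - \<phi> (x0, t)) has_real_derivative (K x - K x0) * m) (at y0)"
    proof (rule has_field_derivative_transform_within_open[OF _ \<open>open T\<close> \<open>y0 \<in> T\<close>])
      show "((\<lambda>t. a x - a x0 + (K x - K x0) * M t) has_real_derivative (K x - K x0) * m) (at y0)"
        using M by (auto intro!: derivative_eq_intros)
      show "a x - a x0 + (K x - K x0) * M t = \<phi> (x, t) - \<phi> (x0, t)" if "t \<in> T" for t
        using form[OF x that] form[OF \<open>x0 \<in> S\<close> that] by (simp add: algebra_simps)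
    qed
    ultimately have "Q (x, y0) - Q (x0, y0) = (K x - K x0) * m" by (rule DERIV_unique)
    then show ?thesis by simp
  qed
  have "((\<lambda>x. Q (x0, y0) + (K x - K x0) * m) has_real_derivative k * m) (at x0)"
    using K by (auto intro!: derivative_eq_intros)
  then have "((\<lambda>x. Q (x, y0)) has_real_derivative k * m) (at x0)"
    by (rule has_field_derivative_transform_within_open[OF _ \<open>open S\<close> \<open>x0 \<in> S\<close>])
      (simp add: Q_increment)
  moreover have "((\<lambda>x. Q (x, y0)) has_real_derivative R (x0, y0)) (at x0)"
    using has_mixed_partial_onD(2)[OF mp] ST by auto
  ultimately show ?thesis by (rule DERIV_unique[symmetric])
qed

lemma mixed_partial_zero_if_additive_form:
  assumes "open U" "has_mixed_partial_on U \<phi> Q R"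
    and form: "\<And>x y. (x, y) \<in> U \<Longrightarrow> \<phi> (x, y) = a x + b y" and "(x0, y0) \<in> U"
  shows "R (x0, y0) = 0"
proof -
  obtain S T where ST: "open S" "open T" "x0 \<in> S" "y0 \<in> T" "S \<times> T \<subseteq> U"
    using assms(1,4) open_prod_elim by (metis mem_Sigma_iff)
  have "R (x0, y0) = 0 * 0"
    by (rule mixed_partial_of_local_product_form[OF assms(2) ST, where K = "\<lambda>_. 0" and M = "\<lambda>_. 0"])
      (use form ST in auto)
  then show ?thesis by simp
qed

lemma product_form_if_mixed_partial_product:
  assumes U: "open U" "convex U" and mp: "has_mixed_partial_on U \<phi> Q R"
    and contQ: "continuous_on U Q"
    and K: "\<And>x y. (x, y) \<in> U \<Longrightarrow> (K has_real_derivative k x) (at x)"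
    and M: "\<And>x y. (x, y) \<in> U \<Longrightarrow> (M has_real_derivative m y) (at y)"
    and contm: "continuous_on (snd ` U) m"
    and R: "\<And>x y. (x, y) \<in> U \<Longrightarrow> R (x, y) = k x * m y"
  obtains a b where "\<And>x y. (x, y) \<in> U \<Longrightarrow> \<phi> (x, y) = a x + b y + K x * M y"
proof -
  let ?\<phi> = "\<lambda>z. \<phi> z - K (fst z) * M (snd z)"
  let ?Q = "\<lambda>z. Q z - K (fst z) * m (snd z)"
  have "has_mixed_partial_on U ?\<phi> ?Q (\<lambda>_. 0)"
    unfolding has_mixed_partial_on_def
  proof (intro allI impI conjI)
    fix x y assume xy: "(x, y) \<in> U"
    have "((\<lambda>t. \<phi> (x, t) - K x * M t) has_real_derivative Q (x, y) - K x * m y) (at y)"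
      by (intro DERIV_diff DERIV_cmult has_mixed_partial_onD(1)[OF mp xy] M[OF xy])
    then show "((\<lambda>t. ?\<phi> (x, t)) has_real_derivative ?Q (x, y)) (at y)" by simp
    have "((\<lambda>s. Q (s, y) - K s * m y) has_real_derivative R (x, y) - k x * m y) (at x)"
      by (intro DERIV_diff DERIV_cmult_right has_mixed_partial_onD(2)[OF mp xy] K[OF xy])
    then show "((\<lambda>s. ?Q (s, y)) has_real_derivative 0) (at x)"
      using R[OF xy] by simp
  qed
  moreover have "continuous_on U ?Q"
  proof -
    have "isCont K x" if "x \<in> fst ` U" for x
      using that K DERIV_isCont by force
    then have "continuous_on (fst ` U) K" by (simp add: continuous_at_imp_continuous_on)
    then have "continuous_on U (\<lambda>z. K (fst z))"
      by (rule continuous_on_compose2) (auto intro: continuous_intros)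
    moreover have "continuous_on U (\<lambda>z. m (snd z))"
      by (rule continuous_on_compose2[OF contm]) (auto intro: continuous_intros)
    ultimately show ?thesis using contQ by (intro continuous_intros)
  qed
  ultimately obtain a b where "\<And>x y. (x, y) \<in> U \<Longrightarrow> ?\<phi> (x, y) = a x + b y"
    using additive_form_if_mixed_partial_zero[OF U] by blast
  then show ?thesis by (intro that[of a b]) (simp add: algebra_simps)
qed

lemma differentiable_if_scaled_increment:
  fixes f g :: "real \<Rightarrow> real"
  assumes "f differentiable (at t0)" "open S" "t0 \<in> S" "c \<noteq> 0"
    and increment: "\<And>t. t \<in> S \<Longrightarrow> f t - f t0 = c * (g t - g t0)"
  shows "g differentiable (at t0)"
proof -
  obtain D where "(f has_real_derivative D) (at t0)"
    using assms(1) real_differentiable_def by blast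
  then have "((\<lambda>t. g t0 + (f t - f t0) / c) has_real_derivative D / c) (at t0)"
    using assms(4) by (auto intro!: derivative_eq_intros)
  then have "(g has_real_derivative D / c) (at t0)"
    by (rule has_field_derivative_transform_within_open[OF _ assms(2,3)])
      (use assms(4) increment in simp)
  then show ?thesis using real_differentiable_def by blast
qed

lemma mixed_partial_of_pseudo_gaussian_form:
  assumes "open U" and mp: "has_mixed_partial_on U \<phi> Q R"
    and dx: "\<And>x y. (x, y) \<in> U \<Longrightarrow> (\<lambda>t. \<phi> (t, y)) differentiable (at x)"
    and R0: "\<And>z. z \<in> U \<Longrightarrow> R z \<noteq> 0"
    and form: "\<And>x y. (x, y) \<in> U \<Longrightarrow> \<phi> (x, y) = a x + b y + s * g x * g y"
    and "(x0, y0) \<in> U"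
  shows "R (x0, y0) = s * deriv g x0 * deriv g y0"
proof -
  obtain S T where ST: "open S" "open T" "x0 \<in> S" "y0 \<in> T" "S \<times> T \<subseteq> U"
    using assms(1,6) open_prod_elim by (metis mem_Sigma_iff)
  let ?K = "\<lambda>x. s * (g x - g x0)" and ?M = "\<lambda>y. g y - g y0"
  have local_form: "\<phi> (x, y) = (\<phi> (x, y0) - \<phi> (x0, y0)) + \<phi> (x0, y) + ?K x * ?M y"
    if "x \<in> S" "y \<in> T" for x y
  proof -
    have "(x, y) \<in> U" "(x, y0) \<in> U" "(x0, y0) \<in> U" "(x0, y) \<in> U" using that ST by auto
    then show ?thesis using form by (simp add: algebra_simps)
  qed
  (* Since R does not vanish, the product term is not identically zero near (x0, y0);
     on a line where it is not, g is an affine function of the differentiable phi. *)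
  have "(\<exists>x1\<in>S. ?K x1 \<noteq> 0) \<and> (\<exists>y1\<in>T. s * ?M y1 \<noteq> 0)"
  proof (rule ccontr)
    assume "\<not> ?thesis"
    then have "?K x * ?M y = 0" if "x \<in> S" "y \<in> T" for x y
      using that by auto
    then have "R (x0, y0) = 0 * 0"
      by (intro mixed_partial_of_local_product_form[OF mp ST, where K = "\<lambda>_. 0" and M = "\<lambda>_. 0"
            and a = "\<lambda>x. \<phi> (x, y0) - \<phi> (x0, y0)" and b = "\<lambda>y. \<phi> (x0, y)"])
        (use local_form in auto)
    then show False using R0 assms(6) by simp
  qed
  then obtain x1 y1 where x1: "x1 \<in> S" "?K x1 \<noteq> 0" and y1: "y1 \<in> T" "s * ?M y1 \<noteq> 0"
    by blast
  have "g differentiable (at y0)"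
  proof (rule differentiable_if_scaled_increment[OF _ \<open>open T\<close> \<open>y0 \<in> T\<close> x1(2)])
    have "((\<lambda>y. \<phi> (x1, y) - \<phi> (x0, y)) has_real_derivative Q (x1, y0) - Q (x0, y0)) (at y0)"
      using x1 ST by (intro DERIV_diff has_mixed_partial_onD(1)[OF mp]) auto
    then show "(\<lambda>y. \<phi> (x1, y) - \<phi> (x0, y)) differentiable (at y0)"
      using real_differentiable_def by blast
    show "(\<phi> (x1, y) - \<phi> (x0, y)) - (\<phi> (x1, y0) - \<phi> (x0, y0)) = ?K x1 * (g y - g y0)"
      if "y \<in> T" for y
      using local_form[OF x1(1) that] by simp
  qed
  moreover have "g differentiable (at x0)"
  proof (rule differentiable_if_scaled_increment[OF _ \<open>open S\<close> \<open>x0 \<in> S\<close> y1(2)])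
    show "(\<lambda>x. \<phi> (x, y1) - \<phi> (x, y0)) differentiable (at x0)"
      using y1 ST by (intro differentiable_diff dx) auto
    show "(\<phi> (x, y1) - \<phi> (x, y0)) - (\<phi> (x0, y1) - \<phi> (x0, y0)) = s * ?M y1 * (g x - g x0)"
      if "x \<in> S" for x
      using local_form[OF that y1(1)] by (simp add: algebra_simps)
  qed
  ultimately have "(?K has_real_derivative s * deriv g x0) (at x0)"
    and "(?M has_real_derivative deriv g y0) (at y0)"
    by (auto simp flip: DERIV_deriv_iff_real_differentiable intro!: derivative_eq_intros)
  then show ?thesis
    using mixed_partial_of_local_product_form[OF mp ST local_form] by simp
qed

section \<open>Separable symmetric functions and pseudo-Gaussian forms\<close>

lemma signed_square_if_separable_symmetric:
  fixes f :: "real \<times> real \<Rightarrow> real"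
  assumes U: "open U" "connected U" "symmetric_set U"
    and sep: "separable_on U f" and sym: "symmetric_fun_on U f"
    and nz: "\<And>z. z \<in> U \<Longrightarrow> f z \<noteq> 0"
  obtains s h where "s = 1 \<or> s = -1" "\<And>x y. (x, y) \<in> U \<Longrightarrow> f (x, y) = s * h x * h y"
proof (cases "U = {}")
  case False
  then obtain z0 where z0: "z0 \<in> U" by blast
  obtain h1 h2 where h: "\<And>x y. (x, y) \<in> U \<Longrightarrow> f (x, y) = h1 x * h2 y"
    using sep unfolding separable_on_def by blast
  define r where "r x = h1 x / h2 x" for x
  have r_eq: "r x = r y" and h2_nz: "h2 x \<noteq> 0" if "(x, y) \<in> U" for x y
  proof -
    have yx: "(y, x) \<in> U" using symmetric_set_swap[OF U(3) that] .
    have "f (y, x) = f (x, y)"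
      using sym that unfolding symmetric_fun_on_def swap2_def by force
    then have "h1 x * h2 y = h1 y * h2 x" using h[OF that] h[OF yx] by simp
    moreover have "h1 x * h2 y \<noteq> 0" "h1 y * h2 x \<noteq> 0" using nz h that yx by metis+
    then have "h2 x \<noteq> 0" "h2 y \<noteq> 0" by simp_all
    ultimately show "r x = r y" "h2 x \<noteq> 0" unfolding r_def by (simp_all add: frac_eq_eq)
  qed
  have r_const: "r (fst z) = r (fst z0)" if "z \<in> U" for z
  proof (rule connected_local_const[OF U(2) that z0])
    show "\<forall>z\<in>U. eventually (\<lambda>w. r (fst z) = r (fst w)) (at z within U)"
    proof
      fix z assume "z \<in> U"
      then obtain S T where ST: "open S" "open T" "z \<in> S \<times> T" "S \<times> T \<subseteq> U"
        using U(1) open_prod_elim by metis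
      have "r (fst z) = r (fst w)" if "w \<in> S \<times> T" for w
      proof -
        have "(fst w, snd z) \<in> U" using ST that by (auto simp: mem_Times_iff)
        then show ?thesis using r_eq[of "fst z" "snd z"] r_eq[of "fst w" "snd z"] \<open>z \<in> U\<close> by simp
      qed
      then show "eventually (\<lambda>w. r (fst z) = r (fst w)) (at z within U)"
        unfolding eventually_at_topological using ST open_Times by blast
    qed
  qed
  define c where "c = r (fst z0)"
  have f_eq: "f (x, y) = c * h2 x * h2 y" if "(x, y) \<in> U" for x y
    using r_const[OF that] h[OF that] h2_nz[OF that]
    by (simp add: c_def r_def field_simps)
  have "c \<noteq> 0" using f_eq[of "fst z0" "snd z0"] nz[of z0] z0 by auto
  show ?thesis
  proof (rule that[of "sgn c" "\<lambda>x. sqrt \<bar>c\<bar> * h2 x"])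
    show "sgn c = 1 \<or> sgn c = -1" using \<open>c \<noteq> 0\<close> by (simp add: sgn_if)
    show "f (x, y) = sgn c * (sqrt \<bar>c\<bar> * h2 x) * (sqrt \<bar>c\<bar> * h2 y)" if "(x, y) \<in> U" for x y
      using f_eq[OF that] by (simp add: algebra_simps abs_mult_sgn)
  qed
qed auto

lemma pseudo_gaussian_form_if_mixed_partial_separable_symmetric:
  assumes U: "open U" "convex U" "symmetric_set U" and mp: "has_mixed_partial_on U \<phi> Q R"
    and contQ: "continuous_on U Q" and contR: "continuous_on U R"
    and sep: "separable_on U R" and sym: "symmetric_fun_on U R" and nz: "\<And>z. z \<in> U \<Longrightarrow> R z \<noteq> 0"
  shows "\<exists>a b g s. (s = 1 \<or> s = -1) \<and>
    (\<forall>x y. (x, y) \<in> U \<longrightarrow> \<phi> (x, y) = a x + b y + s * g x * g y)"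
proof -
  obtain s h where s: "s = 1 \<or> s = -1" and Rh: "\<And>x y. (x, y) \<in> U \<Longrightarrow> R (x, y) = s * h x * h y"
    using signed_square_if_separable_symmetric[OF U(1) convex_connected[OF U(2)] U(3) sep sym nz]
    by blast
  have "is_interval (snd ` U)"
    using U(2) by (simp add: is_interval_convex_1 convex_linear_image linear_snd)
  moreover have "continuous_on (snd ` U) h"
  proof (rule continuous_on_snd_factor[OF U(1) contR, where g = "\<lambda>x. s * h x"])
    show "R (x, y) = s * h x * h y" and "s * h x \<noteq> 0" if "(x, y) \<in> U" for x y
      using Rh[OF that] nz[OF that] by auto
  qed
  ultimately obtain F where F: "\<And>y. y \<in> snd ` U \<Longrightarrow> (F has_real_derivative h y) (at y)"
    using exists_antiderivative_open_interval[OF open_image_snd[OF U(1)]] by blast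
  have in_snd: "x \<in> snd ` U" "y \<in> snd ` U" if "(x, y) \<in> U" for x y
    using that symmetric_set_image_snd[OF U(3)] by force+
  obtain a b where "\<And>x y. (x, y) \<in> U \<Longrightarrow> \<phi> (x, y) = a x + b y + s * F x * F y"
  proof (rule product_form_if_mixed_partial_product[OF U(1,2) mp contQ,
        where K = "\<lambda>x. s * F x" and k = "\<lambda>x. s * h x" and M = F and m = h])
    show "((\<lambda>x. s * F x) has_real_derivative s * h x) (at x)" if "(x, y) \<in> U" for x y
      using F[OF in_snd(1)[OF that]] by (rule DERIV_cmult)
    show "(F has_real_derivative h y) (at y)" if "(x, y) \<in> U" for x y
      using F[OF in_snd(2)[OF that]] .
    show "R (x, y) = s * h x * h y" if "(x, y) \<in> U" for x y
      using Rh[OF that] .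
  qed (use \<open>continuous_on (snd ` U) h\<close> in auto)
  with s show ?thesis by blast
qed

lemma separable_symmetric_if_pseudo_gaussian_form:
  assumes U: "open U" "symmetric_set U" and mp: "has_mixed_partial_on U \<phi> Q R"
    and dx: "\<And>x y. (x, y) \<in> U \<Longrightarrow> (\<lambda>t. \<phi> (t, y)) differentiable (at x)"
    and nz: "\<And>z. z \<in> U \<Longrightarrow> R z \<noteq> 0"
    and form: "\<And>x y. (x, y) \<in> U \<Longrightarrow> \<phi> (x, y) = a x + b y + s * g x * g y"
  shows "separable_on U R \<and> symmetric_fun_on U R"
proof -
  have R: "R (x, y) = s * deriv g x * deriv g y" if "(x, y) \<in> U" for x y
    using mixed_partial_of_pseudo_gaussian_form[OF U(1) mp dx nz form that] .
  have "separable_on U R"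
    unfolding separable_on_def by (rule exI[of _ "\<lambda>x. s * deriv g x"], rule exI[of _ "deriv g"]) (simp add: R)
  moreover have "symmetric_fun_on U R"
    unfolding symmetric_fun_on_def swap2_def
  proof
    fix z assume "z \<in> U"
    then obtain x y where "z = (x, y)" "(x, y) \<in> U" "(y, x) \<in> U"
      using symmetric_set_swap[OF U(2)] by (cases z) auto
    then show "R (case z of (u, v) \<Rightarrow> (v, u)) = R z" using R by simp
  qed
  ultimately show ?thesis ..
qed

lemma ln_mult_abs:
  fixes u v :: real
  assumes "u * v > 0"
  shows "ln (u * v) = ln \<bar>u\<bar> + ln \<bar>v\<bar>"
proof -
  have "u * v = \<bar>u\<bar> * \<bar>v\<bar>" using assms by (simp add: abs_mult[symmetric])
  moreover have "u \<noteq> 0" "v \<noteq> 0" using assms by auto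
  ultimately show ?thesis by (simp add: ln_mult)
qed

lemma separable_on_iff_additive_ln:
  assumes pos: "\<And>z. z \<in> V \<Longrightarrow> \<zeta> z > 0"
  shows "separable_on V \<zeta> \<longleftrightarrow> (\<exists>a b. \<forall>x y. (x, y) \<in> V \<longrightarrow> ln (\<zeta> (x, y)) = a x + b y)"
proof
  assume "separable_on V \<zeta>"
  then obtain f1 f2 where f: "\<And>x y. (x, y) \<in> V \<Longrightarrow> \<zeta> (x, y) = f1 x * f2 y"
    unfolding separable_on_def by blast
  have "ln (\<zeta> (x, y)) = ln \<bar>f1 x\<bar> + ln \<bar>f2 y\<bar>" if "(x, y) \<in> V" for x y
    using f[OF that] pos[OF that] ln_mult_abs by simp
  then show "\<exists>a b. \<forall>x y. (x, y) \<in> V \<longrightarrow> ln (\<zeta> (x, y)) = a x + b y"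
    by (intro exI[of _ "\<lambda>x. ln \<bar>f1 x\<bar>"] exI[of _ "\<lambda>y. ln \<bar>f2 y\<bar>"]) simp
next
  assume "\<exists>a b. \<forall>x y. (x, y) \<in> V \<longrightarrow> ln (\<zeta> (x, y)) = a x + b y"
  then obtain a b where ab: "\<And>x y. (x, y) \<in> V \<Longrightarrow> ln (\<zeta> (x, y)) = a x + b y" by blast
  have "\<zeta> (x, y) = exp (a x) * exp (b y)" if "(x, y) \<in> V" for x y
    using exp_ln[OF pos[OF that]] ab[OF that] by (simp add: exp_add)
  then show "separable_on V \<zeta>"
    unfolding separable_on_def by (intro exI[of _ "\<lambda>x. exp (a x)"] exI[of _ "\<lambda>y. exp (b y)"]) simp
qed

lemma pseudo_gaussian_on_iff_ln:
  assumes pos: "\<And>z. z \<in> V \<Longrightarrow> \<zeta> z > 0"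
  shows "pseudo_gaussian_on V \<zeta> \<longleftrightarrow>
    (\<exists>a b g s. (s = 1 \<or> s = -1) \<and>
       (\<forall>x y. (x, y) \<in> V \<longrightarrow> ln (\<zeta> (x, y)) = a x + b y + s * g x * g y))"
proof
  assume "pseudo_gaussian_on V \<zeta>"
  then obtain f1 f2 g s where s: "s = 1 \<or> s = -1"
    and f: "\<And>x y. (x, y) \<in> V \<Longrightarrow> \<zeta> (x, y) = f1 x * f2 y * exp (s * g x * g y)"
    unfolding pseudo_gaussian_on_def by blast
  have "ln (\<zeta> (x, y)) = ln \<bar>f1 x\<bar> + ln \<bar>f2 y\<bar> + s * g x * g y" if "(x, y) \<in> V" for x y
  proof -
    have "f1 x * f2 y > 0"
      using f[OF that] pos[OF that] by (simp add: zero_less_mult_iff)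
    then have "ln (\<zeta> (x, y)) = ln (f1 x * f2 y) + s * g x * g y"
      using f[OF that] ln_mult_pos[OF _ exp_gt_zero] by simp
    then show ?thesis using ln_mult_abs[OF \<open>f1 x * f2 y > 0\<close>] by simp
  qed
  with s show "\<exists>a b g s. (s = 1 \<or> s = -1) \<and>
      (\<forall>x y. (x, y) \<in> V \<longrightarrow> ln (\<zeta> (x, y)) = a x + b y + s * g x * g y)"
    by (intro exI[of _ "\<lambda>x. ln \<bar>f1 x\<bar>"] exI[of _ "\<lambda>y. ln \<bar>f2 y\<bar>"] exI[of _ g] exI[of _ s]) simp
next
  assume "\<exists>a b g s. (s = 1 \<or> s = -1) \<and>
      (\<forall>x y. (x, y) \<in> V \<longrightarrow> ln (\<zeta> (x, y)) = a x + b y + s * g x * g y)"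
  then obtain a b g s where s: "s = 1 \<or> s = -1"
    and ab: "\<And>x y. (x, y) \<in> V \<Longrightarrow> ln (\<zeta> (x, y)) = a x + b y + s * g x * g y" by blast
  have "\<zeta> (x, y) = exp (a x) * exp (b y) * exp (s * g x * g y)" if "(x, y) \<in> V" for x y
    using exp_ln[OF pos[OF that]] ab[OF that] by (simp add: exp_add)
  with s show "pseudo_gaussian_on V \<zeta>"
    unfolding pseudo_gaussian_on_def
    by (intro exI[of _ "\<lambda>x. exp (a x)"] exI[of _ "\<lambda>y. exp (b y)"] exI[of _ g] exI[of _ s]) simp
qed

section \<open>Positive twice differentiable functions\<close>

locale positive_C2 =
  fixes G :: "(real \<times> real) set" and \<zeta> :: "real \<times> real \<Rightarrow> real"
  assumes open_G: "open G" and positive: "\<And>z. z \<in> G \<Longrightarrow> \<zeta> z > 0" and C2: "C2_on G \<zeta>"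
begin

lemma partial_derivatives:
  assumes "(x, y) \<in> G"
  shows "((\<lambda>t. \<zeta> (t, y)) has_real_derivative px \<zeta> (x, y)) (at x)"
    and "((\<lambda>t. \<zeta> (x, t)) has_real_derivative py \<zeta> (x, y)) (at y)"
    and "((\<lambda>t. py \<zeta> (t, y)) has_real_derivative px (py \<zeta>) (x, y)) (at x)"
  using C2 assms
  by (auto simp: C2_on_def has_partials_on_def px_def py_def DERIV_deriv_iff_real_differentiable)

lemma ln_has_derivative_snd:
  "(x, y) \<in> G \<Longrightarrow> ((\<lambda>t. ln (\<zeta> (x, t))) has_real_derivative py \<zeta> (x, y) / \<zeta> (x, y)) (at y)"
  using DERIV_chain2[OF DERIV_ln_divide[OF positive] partial_derivatives(2)] by simp

lemma ln_differentiable_fst: "(x, y) \<in> G \<Longrightarrow> (\<lambda>t. ln (\<zeta> (t, y))) differentiable (at x)"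
  using DERIV_chain2[OF DERIV_ln_divide[OF positive] partial_derivatives(1)] real_differentiable_def
  by blast

lemma py_ln: "z \<in> G \<Longrightarrow> py (\<lambda>z. ln (\<zeta> z)) z = py \<zeta> z / \<zeta> z"
  using DERIV_imp_deriv[OF ln_has_derivative_snd] by (cases z) (simp add: py_def)

lemma py_ln_has_derivative_fst:
  assumes "(x, y) \<in> G"
  shows "((\<lambda>s. py (\<lambda>z. ln (\<zeta> z)) (s, y)) has_real_derivative
    (px (py \<zeta>) (x, y) * \<zeta> (x, y) - py \<zeta> (x, y) * px \<zeta> (x, y)) / (\<zeta> (x, y))\<^sup>2) (at x)"
proof -
  have "((\<lambda>s. py \<zeta> (s, y) / \<zeta> (s, y)) has_real_derivative
      (px (py \<zeta>) (x, y) * \<zeta> (x, y) - py \<zeta> (x, y) * px \<zeta> (x, y)) / (\<zeta> (x, y))\<^sup>2) (at x)"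
    using DERIV_divide[OF partial_derivatives(3,1)[OF assms]] positive[OF assms]
    by (simp add: power2_eq_square)
  moreover have "open ((\<lambda>s. (s, y)) -` G)"
    by (intro open_vimage open_G continuous_intros)
  ultimately show ?thesis
    by (rule has_field_derivative_transform_within_open) (use assms py_ln in auto)
qed

lemma dxdy_log_eq:
  "z \<in> G \<Longrightarrow> dxdy_log \<zeta> z = (px (py \<zeta>) z * \<zeta> z - py \<zeta> z * px \<zeta> z) / (\<zeta> z)\<^sup>2"
  using DERIV_imp_deriv[OF py_ln_has_derivative_fst] by (cases z) (simp add: dxdy_log_def px_def)

lemma has_mixed_partial_on_ln: "has_mixed_partial_on G (\<lambda>z. ln (\<zeta> z)) (py (\<lambda>z. ln (\<zeta> z))) (dxdy_log \<zeta>)"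
  unfolding has_mixed_partial_on_def
  using ln_has_derivative_snd py_ln py_ln_has_derivative_fst dxdy_log_eq by simp

lemma continuous_on_py_ln: "continuous_on G (py (\<lambda>z. ln (\<zeta> z)))"
proof -
  have "continuous_on G (\<lambda>z. py \<zeta> z / \<zeta> z)"
    using C2 positive by (intro continuous_intros) (auto simp: C2_on_def less_imp_neq[symmetric])
  then show ?thesis by (rule continuous_on_eq) (simp add: py_ln)
qed

lemma continuous_on_dxdy_log: "continuous_on G (dxdy_log \<zeta>)"
proof -
  have "continuous_on G (\<lambda>z. (px (py \<zeta>) z * \<zeta> z - py \<zeta> z * px \<zeta> z) / (\<zeta> z)\<^sup>2)"
    using C2 positive by (intro continuous_intros) (auto simp: C2_on_def less_imp_neq[symmetric])
  then show ?thesis by (rule continuous_on_eq) (simp add: dxdy_log_eq)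
qed

lemma open_dxdy_log_nonzero: "open {z \<in> G. dxdy_log \<zeta> z \<noteq> 0}"
proof -
  have "open (G \<inter> dxdy_log \<zeta> -` (- {0}))"
    by (rule continuous_open_preimage[OF continuous_on_dxdy_log open_G]) auto
  moreover have "G \<inter> dxdy_log \<zeta> -` (- {0}) = {z \<in> G. dxdy_log \<zeta> z \<noteq> 0}" by auto
  ultimately show ?thesis by simp
qed

lemma separable_on_imp_dxdy_log_zero:
  assumes "open V" "V \<subseteq> G" "separable_on V \<zeta>" "z \<in> V"
  shows "dxdy_log \<zeta> z = 0"
proof -
  have "\<And>z. z \<in> V \<Longrightarrow> \<zeta> z > 0" using assms(2) positive by blast
  then obtain a b where "\<And>x y. (x, y) \<in> V \<Longrightarrow> ln (\<zeta> (x, y)) = a x + b y"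
    using assms(3) separable_on_iff_additive_ln by blast
  moreover obtain x y where "z = (x, y)" by fastforce
  ultimately show ?thesis
    using mixed_partial_zero_if_additive_form[OF assms(1)
        has_mixed_partial_on_subset[OF has_mixed_partial_on_ln assms(2)]] assms(4)
    by blast
qed

lemma dxdy_log_zero_imp_separable_on:
  assumes "open V" "convex V" "V \<subseteq> G" "\<And>z. z \<in> V \<Longrightarrow> dxdy_log \<zeta> z = 0"
  shows "separable_on V \<zeta>"
proof -
  obtain a b where "\<And>x y. (x, y) \<in> V \<Longrightarrow> ln (\<zeta> (x, y)) = a x + b y"
    using additive_form_if_mixed_partial_zero[OF assms(1,2)
        has_mixed_partial_on_subset[OF has_mixed_partial_on_ln assms(3)]
        continuous_on_subset[OF continuous_on_py_ln assms(3)] assms(4)]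
    by blast
  moreover have "\<And>z. z \<in> V \<Longrightarrow> \<zeta> z > 0" using assms(3) positive by blast
  ultimately show ?thesis using separable_on_iff_additive_ln by blast
qed

lemma strictly_non_separable_on_iff_dense:
  "strictly_non_separable_on G \<zeta> \<longleftrightarrow> G \<subseteq> closure {z \<in> G. dxdy_log \<zeta> z \<noteq> 0}"
  (is "_ \<longleftrightarrow> G \<subseteq> closure ?G'")
proof
  assume sns: "strictly_non_separable_on G \<zeta>"
  show "G \<subseteq> closure ?G'"
  proof
    fix z assume "z \<in> G"
    show "z \<in> closure ?G'"
    proof (rule ccontr)
      assume "z \<notin> closure ?G'"
      moreover have "open (G - closure ?G')" by (intro open_Diff open_G closed_closure)
      ultimately obtain e where e: "e > 0" "ball z e \<subseteq> G - closure ?G'"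
        using \<open>z \<in> G\<close> open_contains_ball by blast
      then have "dxdy_log \<zeta> w = 0" if "w \<in> ball z e" for w
        using that closure_subset[of ?G'] by auto
      then have "separable_on (ball z e) \<zeta>"
        using e by (intro dxdy_log_zero_imp_separable_on) auto
      moreover have "open (ball z e)" "ball z e \<noteq> {}" "ball z e \<subseteq> G" using e by auto
      ultimately show False
        using sns unfolding strictly_non_separable_on_def by blast
    qed
  qed
next
  assume dense: "G \<subseteq> closure ?G'"
  show "strictly_non_separable_on G \<zeta>"
    unfolding strictly_non_separable_on_def
  proof (intro allI impI notI)
    fix V assume V: "open V \<and> V \<noteq> {} \<and> V \<subseteq> G" and "separable_on V \<zeta>"
    then have "V \<inter> ?G' = {}" using separable_on_imp_dxdy_log_zero by blast
    then have "V \<inter> closure ?G' = {}" using V open_Int_closure_eq_empty by blast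
    then show False using V dense by blast
  qed
qed

lemma pseudo_gaussian_on_iff_dxdy_log_separable_symmetric:
  assumes U: "U \<subseteq> {z \<in> G. dxdy_log \<zeta> z \<noteq> 0}" "symmetric_set U" "open U" "convex U"
  shows "separable_on U (dxdy_log \<zeta>) \<and> symmetric_fun_on U (dxdy_log \<zeta>) \<longleftrightarrow> pseudo_gaussian_on U \<zeta>"
proof -
  have "U \<subseteq> G" and nz: "\<And>z. z \<in> U \<Longrightarrow> dxdy_log \<zeta> z \<noteq> 0" using U(1) by auto
  then have pos: "\<And>z. z \<in> U \<Longrightarrow> \<zeta> z > 0" using positive by blast
  have mp: "has_mixed_partial_on U (\<lambda>z. ln (\<zeta> z)) (py (\<lambda>z. ln (\<zeta> z))) (dxdy_log \<zeta>)"
    using has_mixed_partial_on_subset[OF has_mixed_partial_on_ln \<open>U \<subseteq> G\<close>] .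
  have "separable_on U (dxdy_log \<zeta>) \<and> symmetric_fun_on U (dxdy_log \<zeta>) \<longleftrightarrow>
      (\<exists>a b g s. (s = 1 \<or> s = -1) \<and>
        (\<forall>x y. (x, y) \<in> U \<longrightarrow> ln (\<zeta> (x, y)) = a x + b y + s * g x * g y))"
  proof
    assume "separable_on U (dxdy_log \<zeta>) \<and> symmetric_fun_on U (dxdy_log \<zeta>)"
    then show "\<exists>a b g s. (s = 1 \<or> s = -1) \<and>
        (\<forall>x y. (x, y) \<in> U \<longrightarrow> ln (\<zeta> (x, y)) = a x + b y + s * g x * g y)"
      using pseudo_gaussian_form_if_mixed_partial_separable_symmetric[OF U(3,4,2) mp
          continuous_on_subset[OF continuous_on_py_ln \<open>U \<subseteq> G\<close>]
          continuous_on_subset[OF continuous_on_dxdy_log \<open>U \<subseteq> G\<close>] _ _ nz]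
      by simp
  next
    assume "\<exists>a b g s. (s = 1 \<or> s = -1) \<and>
        (\<forall>x y. (x, y) \<in> U \<longrightarrow> ln (\<zeta> (x, y)) = a x + b y + s * g x * g y)"
    then obtain a b g s where form: "\<And>x y. (x, y) \<in> U \<Longrightarrow> ln (\<zeta> (x, y)) = a x + b y + s * g x * g y"
      by blast
    have dx: "\<And>x y. (x, y) \<in> U \<Longrightarrow> (\<lambda>t. ln (\<zeta> (t, y))) differentiable (at x)"
      using ln_differentiable_fst \<open>U \<subseteq> G\<close> by blast
    show "separable_on U (dxdy_log \<zeta>) \<and> symmetric_fun_on U (dxdy_log \<zeta>)"
      by (rule separable_symmetric_if_pseudo_gaussian_form[OF U(3,2) mp dx nz form])
  qed
  also have "\<dots> \<longleftrightarrow> pseudo_gaussian_on U \<zeta>"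
    by (rule pseudo_gaussian_on_iff_ln[OF pos, symmetric])
  finally show ?thesis .
qed

end

theorem lemma3p11:
  fixes G :: "(real \<times> real) set" and \<zeta> :: "real \<times> real \<Rightarrow> real"
  assumes "open G"
    and "\<forall>z\<in>G. \<zeta> z > 0"
    and "C2_on G \<zeta>"
  shows "(convex G \<longrightarrow> ((\<forall>z\<in>G. dxdy_log \<zeta> z = 0) \<longleftrightarrow> separable_on G \<zeta>))
    \<and> open {z\<in>G. dxdy_log \<zeta> z \<noteq> 0}
    \<and> (strictly_non_separable_on G \<zeta> \<longleftrightarrow> G \<subseteq> closure {z\<in>G. dxdy_log \<zeta> z \<noteq> 0})
    \<and> (\<forall>U. U \<subseteq> {z\<in>G. dxdy_log \<zeta> z \<noteq> 0} \<and> symmetric_set U \<and> open U \<and> convex U \<longrightarrow>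
          ((separable_on U (dxdy_log \<zeta>) \<and> symmetric_fun_on U (dxdy_log \<zeta>))
             \<longleftrightarrow> pseudo_gaussian_on U \<zeta>))"
proof -
  interpret positive_C2 G \<zeta> using assms by unfold_locales auto
  have "convex G \<longrightarrow> ((\<forall>z\<in>G. dxdy_log \<zeta> z = 0) \<longleftrightarrow> separable_on G \<zeta>)"
    using dxdy_log_zero_imp_separable_on[OF open_G _ order_refl]
      separable_on_imp_dxdy_log_zero[OF open_G order_refl] by fast
  then show ?thesis
    using open_dxdy_log_nonzero strictly_non_separable_on_iff_dense
      pseudo_gaussian_on_iff_dxdy_log_separable_symmetric by blast
qed

end
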